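(* Let $\mathbf{a}=a_1a_2\cdots a_k\in\mathbb{N}^k$. Then $\hat{A}_{\mathbf{a}}$ and $A_{\mathbf{a}}$ are primitive and have the same Perron–Frobenius eigenvalue $E_{\mathbf{a}}$. Moreover, $q_{kn}(\alpha)\sim E_{\mathbf{a}}^n$ for all $\alpha\in\mathcal{P}(\mathbf{a})$.
   Context: For $n\in\mathbb{N}$ let the alphabet be $\mathscr{A}_n=\{(\mathbf{1},i)_n:1\le i\le n+1\}\cup\{(\mathbf{2},1)_n\}\cup\{(\mathbf{3},i)_n:1\le i\le n\}$; for $e=(\mathbf{t},i)_n$ its type is $\mathbf{t}(e)=\mathbf{t}$. For $\mathbf{t}\in\{\mathbf{1},\mathbf{2},\mathbf{3}\}$ and $\hat e\in\mathscr{A}_m$, write $\mathbf{t}\to\hat e$ iff $(\mathbf{t},\hat e)$ is one of: $(\mathbf{1},(\mathbf{2},1)_m)$; $(\mathbf{2},(\mathbf{1},i)_m)$ with $1\le i\le m+1$; $(\mathbf{2},(\mathbf{3},i)_m)$ with $1\le i\le m$; $(\mathbf{3},(\mathbf{1},i)_m)$ with $1\le i\le m$; $(\mathbf{3},(\mathbf{3},i)_m)$ with $1\le i\le m-1$. For $e\in\mathscr{A}_n,\hat e\in\mathscr{A}_m$, write $e\to\hat e$ iff $\mathbf{t}(e)\to\hat e$. For $\mathbf{a}=a_1\cdots a_k$, let $\mathcal{A}_{\mathbf{a}}=\{e_1\cdots e_k: e_i\in\mathscr{A}_{a_i},\ e_i\to e_{i+1},\ 1\le i<k\}$; for $\mathbf{v}=e_1\cdots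 e_k\in\mathcal{A}_{\mathbf{a}}$ its header is $h_{\mathbf{v}}=e_1$ and its tail type is $\mathbf{t}(\mathbf{v})=\mathbf{t}(e_k)$. The incidence matrix $A_{\mathbf{a}}=(a_{\mathbf{v}\mathbf{w}})_{\mathbf{v},\mathbf{w}\in\mathcal{A}_{\mathbf{a}}}$ has $a_{\mathbf{v}\mathbf{w}}=1$ if $\mathbf{t}(\mathbf{v})\to h_{\mathbf{w}}$ and $0$ otherwise. For $m\in\mathbb{N}$ let $\hat A_m=\begin{pmatrix}0&1&0\\ m+1&0&m\\ m&0&m-1\end{pmatrix}$ and $\hat A_{\mathbf{a}}=\hat A_{a_k}\cdots\hat A_{a_2}\hat A_{a_1}$. A nonnegative square matrix is primitive if some power has all entries positive. For irrational $\alpha=[a_1,a_2,\dots]$ (continued fraction), $q_n(\alpha)$ are the denominators of the convergents: $q_{-1}=0$, $q_0=1$, $q_{n+1}=a_{n+1}q_n+q_{n-1}$. $\mathcal{P}(\mathbf{a})$ is the set of $\alpha\in[0,1]\setminus\mathbb{Q}$ with purely periodic expansion $\alpha=[\overline{a_1,\dots,a_k}]$. For positive sequences, $x_n\sim y_n$ means $C^{-1}y_n\le x_n\le Cy_n$ for some constant $C>1$ independent of $n$. *)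

theory Defs
  imports Complex_Main
begin

datatype ty = T1 | T2 | T3

text \<open>A letter (t,i)_n is represented as the triple (t, i, n).\<close>
type_synonym letter = "ty \<times> nat \<times> nat"

definition alphabet :: "nat \<Rightarrow> letter set" where
  "alphabet n = {(T1, i, n) | i. 1 \<le> i \<and> i \<le> n + 1} \<union> {(T2, 1, n)}
                 \<union> {(T3, i, n) | i. 1 \<le> i \<and> i \<le> n}"

definition letter_type :: "letter \<Rightarrow> ty" where
  "letter_type e = fst e"

fun arrow :: "ty \<Rightarrow> letter \<Rightarrow> bool" where
  "arrow t (t', i, m) =
     ((t = T1 \<and> t' = T2 \<and> i = 1)
    \<or> (t = T2 \<and> t' = T1 \<and> 1 \<le> i \<and> i \<le> m + 1)
    \<or> (t = T2 \<and> t' = T3 \<and> 1 \<le> i \<and> i \<le> m)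
    \<or> (t = T3 \<and> t' = T1 \<and> 1 \<le> i \<and> i \<le> m)
    \<or> (t = T3 \<and> t' = T3 \<and> 1 \<le> i \<and> i + 1 \<le> m))"

text \<open>The set of admissible words for the word a = a_1 ... a_k (0-indexed list).\<close>
definition adm_words :: "nat list \<Rightarrow> letter list set" where
  "adm_words a = {w. length w = length a
        \<and> (\<forall>i<length a. w ! i \<in> alphabet (a ! i))
        \<and> (\<forall>i. i + 1 < length a \<longrightarrow> arrow (letter_type (w ! i)) (w ! (i + 1)))}"

text \<open>Incidence matrix A_a, as a function on the (finite) index set adm_words a:
  entry (v,w) is 1 iff t(v) -> h_w, where t(v) is the type of the last letter
  and h_w the first letter.\<close>
definition incA :: "nat list \<Rightarrow> letter list \<Rightarrow> letter list \<Rightarrow> real" where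
  "incA a v w = (if arrow (letter_type (last v)) (hd w) then 1 else 0)"

definition matmul :: "'i set \<Rightarrow> ('i \<Rightarrow> 'i \<Rightarrow> real) \<Rightarrow> ('i \<Rightarrow> 'i \<Rightarrow> real) \<Rightarrow> 'i \<Rightarrow> 'i \<Rightarrow> real" where
  "matmul I M N v w = (\<Sum>u\<in>I. M v u * N u w)"

definition matid :: "'i \<Rightarrow> 'i \<Rightarrow> real" where
  "matid v w = (if v = w then 1 else 0)"

fun matpow :: "'i set \<Rightarrow> ('i \<Rightarrow> 'i \<Rightarrow> real) \<Rightarrow> nat \<Rightarrow> 'i \<Rightarrow> 'i \<Rightarrow> real" where
  "matpow I M 0 = matid"
| "matpow I M (Suc k) = matmul I (matpow I M k) M"

definition primitive :: "'i set \<Rightarrow> ('i \<Rightarrow> 'i \<Rightarrow> real) \<Rightarrow> bool" where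
  "primitive I M \<longleftrightarrow> (\<forall>v\<in>I. \<forall>w\<in>I. 0 \<le> M v w)
      \<and> (\<exists>k\<ge>1. \<forall>v\<in>I. \<forall>w\<in>I. 0 < matpow I M k v w)"

text \<open>(Complex) eigenvalues and the spectral radius; for a primitive matrix the spectral
  radius is its Perron--Frobenius eigenvalue.\<close>
definition is_eigenvalue :: "'i set \<Rightarrow> ('i \<Rightarrow> 'i \<Rightarrow> real) \<Rightarrow> complex \<Rightarrow> bool" where
  "is_eigenvalue I M c \<longleftrightarrow> (\<exists>x :: 'i \<Rightarrow> complex. (\<exists>v\<in>I. x v \<noteq> 0)
      \<and> (\<forall>v\<in>I. (\<Sum>w\<in>I. complex_of_real (M v w) * x w) = c * x v))"

definition PF_eigenvalue :: "'i set \<Rightarrow> ('i \<Rightarrow> 'i \<Rightarrow> real) \<Rightarrow> real" where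
  "PF_eigenvalue I M = Sup {cmod c | c. is_eigenvalue I M c}"

definition idx3 :: "nat set" where "idx3 = {0, 1, 2}"

definition hatA :: "nat \<Rightarrow> nat \<Rightarrow> nat \<Rightarrow> real" where
  "hatA m i j =
     (if i = 0 then (if j = 1 then 1 else 0)
      else if i = 1 then (if j = 0 then real m + 1 else if j = 2 then real m else 0)
      else if i = 2 then (if j = 0 then real m else if j = 2 then real m - 1 else 0)
      else 0)"

text \<open>hat A_a = hat A_{a_k} ... hat A_{a_2} hat A_{a_1}.\<close>
definition hatA_word :: "nat list \<Rightarrow> nat \<Rightarrow> nat \<Rightarrow> real" where
  "hatA_word a = foldl (\<lambda>P m. matmul idx3 (hatA m) P) matid a"

definition gauss :: "real \<Rightarrow> real" where
  "gauss x = frac (1 / x)"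

text \<open>cf_digit x n is the partial quotient a_{n+1}(x) (0-indexed).\<close>
definition cf_digit :: "real \<Rightarrow> nat \<Rightarrow> nat" where
  "cf_digit x n = nat \<lfloor>1 / (gauss ^^ n) x\<rfloor>"

fun q_den :: "real \<Rightarrow> nat \<Rightarrow> nat" where
  "q_den x 0 = 1"
| "q_den x (Suc 0) = cf_digit x 0"
| "q_den x (Suc (Suc n)) = cf_digit x (Suc n) * q_den x (Suc n) + q_den x n"

definition purely_periodic :: "nat list \<Rightarrow> real set" where
  "purely_periodic a = {x. 0 \<le> x \<and> x \<le> 1 \<and> x \<notin> \<rat>
        \<and> (\<forall>n. cf_digit x n = a ! (n mod length a))}"

end

theory Submission
  imports Defs "HOL-Analysis.Product_Vector" "HOL-Library.Product_Order"
begin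

(* Index the types 1, 2, 3 by 0, 1, 2 and let H_a = hatA_{a_1} ... hatA_{a_k}, so that
   hatA_word a is H of the reversed word. Entry (j, l) of hatA_m counts the letters of type l in
   the m-th alphabet that may follow type j; hence (H_a)_{jl} counts the admissible words whose
   header may follow type j and whose tail type is l, and A_a^(n+1) factors through H_a^n. Both
   primitivity claims thus reduce to H_a >= hatA_1^k entrywise and hatA_1^5 > 0.

   hatA_m sends (q', q, q - q') to the vector built in the same way from (m q + q', q), i.e. it
   lifts the continued fraction recursion. Hence the positive Perron eigenvector of the 2x2
   product [[a_1,1],[1,0]] ... [[a_k,1],[1,0]] lifts to positive eigenvectors of A_a and of
   hatA_word a (via the reversed word, whose 2x2 product is the transpose), and a nonnegative
   matrix with a positive eigenvector has that eigenvalue as its spectral radius E_a. Finally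
   (q_kn, q_(kn-1)) is the n-th iterate of the reversed 2x2 product on (1, 0); squeezing it
   between multiples of the Perron eigenvector gives q_kn <= E_a^n <= q_(k(n+1)). *)

definition nonneg_matrix :: "'i set \<Rightarrow> ('i \<Rightarrow> 'i \<Rightarrow> real) \<Rightarrow> bool" where
  "nonneg_matrix I A \<longleftrightarrow> (\<forall>v\<in>I. \<forall>w\<in>I. 0 \<le> A v w)"

definition matrix_le :: "'i set \<Rightarrow> ('i \<Rightarrow> 'i \<Rightarrow> real) \<Rightarrow> ('i \<Rightarrow> 'i \<Rightarrow> real) \<Rightarrow> bool" where
  "matrix_le I A B \<longleftrightarrow> (\<forall>v\<in>I. \<forall>w\<in>I. A v w \<le> B v w)"

lemma matmul_assoc:
  assumes "finite I"
  shows "matmul I (matmul I A B) C = matmul I A (matmul I B C)"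
proof (intro ext)
  fix v w
  have "matmul I (matmul I A B) C v w = (\<Sum>u\<in>I. \<Sum>x\<in>I. A v x * B x u * C u w)"
    unfolding matmul_def by (simp add: sum_distrib_right)
  also have "\<dots> = (\<Sum>x\<in>I. \<Sum>u\<in>I. A v x * B x u * C u w)"
    by (rule sum.swap)
  also have "\<dots> = matmul I A (matmul I B C) v w"
    unfolding matmul_def by (simp add: sum_distrib_left mult.assoc)
  finally show "matmul I (matmul I A B) C v w = matmul I A (matmul I B C) v w" .
qed

lemma sum_matmul:
  assumes "finite I"
  shows "(\<Sum>j\<in>I. matmul I A B v j * x j) = (\<Sum>u\<in>I. A v u * (\<Sum>j\<in>I. B u j * x j))"
proof -
  have "(\<Sum>j\<in>I. matmul I A B v j * x j) = (\<Sum>j\<in>I. \<Sum>u\<in>I. A v u * (B u j * x j))"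
    unfolding matmul_def by (simp add: sum_distrib_right mult.assoc)
  also have "\<dots> = (\<Sum>u\<in>I. A v u * (\<Sum>j\<in>I. B u j * x j))"
    by (subst sum.swap) (simp add: sum_distrib_left)
  finally show ?thesis .
qed

lemma matmul_matid_left: "finite I \<Longrightarrow> v \<in> I \<Longrightarrow> matmul I matid A v w = A v w"
  unfolding matmul_def matid_def by (simp add: if_distrib[of "\<lambda>x. x * _"] cong: if_cong)

lemma matmul_matid_right: "finite I \<Longrightarrow> w \<in> I \<Longrightarrow> matmul I A matid v w = A v w"
  unfolding matmul_def matid_def by (simp add: if_distrib[of "\<lambda>x. _ * x"] eq_commute cong: if_cong)

lemma matmul_cong_left:
  "(\<And>u. u \<in> I \<Longrightarrow> A v u = B v u) \<Longrightarrow> matmul I A C v w = matmul I B C v w"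
  unfolding matmul_def by (intro sum.cong) auto

lemma matpow_add:
  assumes "finite I" "v \<in> I" "w \<in> I"
  shows "matpow I M (m + n) v w = matmul I (matpow I M m) (matpow I M n) v w"
  using assms(3)
proof (induction n arbitrary: w)
  case 0
  then show ?case using assms(1) by (simp add: matmul_matid_right)
next
  case (Suc n)
  have "matpow I M (m + Suc n) v w = matmul I (matpow I M (m + n)) M v w" by simp
  also have "\<dots> = matmul I (matmul I (matpow I M m) (matpow I M n)) M v w"
    using Suc.IH by (intro matmul_cong_left)
  also have "\<dots> = matmul I (matpow I M m) (matpow I M (Suc n)) v w"
    using assms(1) by (simp add: matmul_assoc)
  finally show ?case .
qed

lemma matpow_Suc_left:
  assumes "finite I" "v \<in> I" "w \<in> I"
  shows "matpow I M (Suc n) v w = matmul I M (matpow I M n) v w"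
proof -
  have "matpow I M (1 + n) v w = matmul I (matpow I M 1) (matpow I M n) v w"
    using assms by (rule matpow_add)
  also have "\<dots> = matmul I M (matpow I M n) v w"
    using assms(1,2) by (intro matmul_cong_left) (simp add: matmul_matid_left)
  finally show ?thesis by simp
qed

lemma nonneg_matmul: "nonneg_matrix I A \<Longrightarrow> nonneg_matrix I B \<Longrightarrow> nonneg_matrix I (matmul I A B)"
  unfolding nonneg_matrix_def matmul_def by (auto intro!: sum_nonneg)

lemma nonneg_matpow:
  assumes "nonneg_matrix I A"
  shows "nonneg_matrix I (matpow I A n)"
proof (induction n)
  case 0
  show ?case by (simp add: nonneg_matrix_def matid_def)
next
  case (Suc n)
  then show ?case using assms by (simp add: nonneg_matmul)
qed

lemma matmul_mono:
  assumes "nonneg_matrix I A" "nonneg_matrix I B" "matrix_le I A A'" "matrix_le I B B'"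
  shows "matrix_le I (matmul I A B) (matmul I A' B')"
  using assms unfolding nonneg_matrix_def matrix_le_def matmul_def
  by (intro ballI sum_mono mult_mono; meson order_trans)

lemma matpow_mult_le:
  assumes "finite I" "nonneg_matrix I H" "matrix_le I (matpow I H k) B"
  shows "matrix_le I (matpow I H (k * n)) (matpow I B n)"
proof (induction n)
  case 0
  then show ?case by (simp add: matrix_le_def)
next
  case (Suc n)
  have "matrix_le I (matmul I (matpow I H (k * n)) (matpow I H k)) (matpow I B (Suc n))"
    using Suc assms by (auto intro!: matmul_mono nonneg_matpow)
  then show ?case
    using matpow_add[OF assms(1), of _ _ H "k * n" k] by (simp add: matrix_le_def add.commute)
qed

section \<open>The matrices hat A\<close>

lemma finite_idx3 [simp]: "finite idx3"
  by (simp add: idx3_def)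

lemma sum_idx3: "(\<Sum>l\<in>idx3. f l) = f 0 + f 1 + f 2"
  by (simp add: idx3_def add.assoc)

lemma matpow_idx3_Suc:
  "matpow idx3 M (Suc n) i j
     = matpow idx3 M n i 0 * M 0 j + matpow idx3 M n i 1 * M 1 j + matpow idx3 M n i 2 * M 2 j"
  by (simp add: matmul_def sum_idx3)

lemma nonneg_hatA: "1 \<le> m \<Longrightarrow> nonneg_matrix idx3 (hatA m)"
  by (auto simp: nonneg_matrix_def hatA_def idx3_def)

lemma hatA_one_le: "1 \<le> m \<Longrightarrow> matrix_le idx3 (hatA 1) (hatA m)"
  by (auto simp: matrix_le_def hatA_def idx3_def)

lemma matpow_hatA_one_pos:
  assumes "5 \<le> n" "i \<in> idx3" "j \<in> idx3"
  shows "0 < matpow idx3 (hatA 1) n i j"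
  using assms
proof (induction n arbitrary: j rule: dec_induct)
  case base
  have "i = 0 \<or> i = 1 \<or> i = 2" "j = 0 \<or> j = 1 \<or> j = 2"
    using base.prems by (auto simp: idx3_def)
  then show ?case
    by (auto simp del: matpow.simps(2) simp: matpow_idx3_Suc hatA_def matid_def eval_nat_numeral)
next
  case (step n)
  have "0 < matpow idx3 (hatA 1) n i l" if "l \<in> idx3" for l
    using step.IH step.prems(1) that by blast
  then have "0 < matpow idx3 (hatA 1) n i 0" "0 < matpow idx3 (hatA 1) n i 1"
    "0 < matpow idx3 (hatA 1) n i 2" by (auto simp: idx3_def)
  moreover have "j = 0 \<or> j = 1 \<or> j = 2"
    using step.prems(2) by (auto simp: idx3_def)
  \<comment> \<open>every column of hatA 1 has a positive entry\<close>
  ultimately show ?case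
    unfolding matpow_idx3_Suc by (auto simp: hatA_def intro: add_pos_nonneg add_nonneg_pos)
qed

definition hatA_prod :: "nat list \<Rightarrow> nat \<Rightarrow> nat \<Rightarrow> real" where
  "hatA_prod a = foldr (\<lambda>m P. matmul idx3 (hatA m) P) a matid"

lemma hatA_prod_Cons: "hatA_prod (m # a) = matmul idx3 (hatA m) (hatA_prod a)"
  by (simp add: hatA_prod_def)

lemma hatA_word_eq_hatA_prod_rev: "hatA_word a = hatA_prod (rev a)"
  by (simp add: hatA_word_def hatA_prod_def foldl_conv_foldr)

lemma nonneg_hatA_prod: "\<forall>m\<in>set a. 1 \<le> m \<Longrightarrow> nonneg_matrix idx3 (hatA_prod a)"
proof (induction a)
  case Nil
  show ?case by (simp add: hatA_prod_def nonneg_matrix_def matid_def)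
next
  case (Cons m a)
  then show ?case by (simp add: hatA_prod_Cons nonneg_matmul nonneg_hatA)
qed

lemma matpow_hatA_one_le_hatA_prod:
  "\<forall>m\<in>set a. 1 \<le> m \<Longrightarrow> matrix_le idx3 (matpow idx3 (hatA 1) (length a)) (hatA_prod a)"
proof (induction a)
  case Nil
  show ?case by (simp add: hatA_prod_def matrix_le_def)
next
  case (Cons m a)
  then have "matrix_le idx3 (matmul idx3 (hatA 1) (matpow idx3 (hatA 1) (length a)))
      (hatA_prod (m # a))"
    unfolding hatA_prod_Cons
    by (intro matmul_mono nonneg_hatA nonneg_matpow hatA_one_le) auto
  moreover have "matpow idx3 (hatA 1) (Suc (length a)) v w
      = matmul idx3 (hatA 1) (matpow idx3 (hatA 1) (length a)) v w"
    if "v \<in> idx3" "w \<in> idx3" for v w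
    using that by (intro matpow_Suc_left) auto
  ultimately show ?case by (simp add: matrix_le_def)
qed

lemma matpow_hatA_prod_pos:
  assumes "a \<noteq> []" "\<forall>m\<in>set a. 1 \<le> m" "i \<in> idx3" "j \<in> idx3"
  shows "0 < matpow idx3 (hatA_prod a) 5 i j"
proof -
  have "matrix_le idx3 (matpow idx3 (hatA 1) (length a * 5)) (matpow idx3 (hatA_prod a) 5)"
    using assms(2) by (intro matpow_mult_le nonneg_hatA matpow_hatA_one_le_hatA_prod) auto
  moreover have "0 < matpow idx3 (hatA 1) (length a * 5) i j"
    using assms by (intro matpow_hatA_one_pos) (auto simp: Suc_le_eq)
  ultimately show ?thesis
    using assms(3,4) unfolding matrix_le_def by fastforce
qed

lemma primitive_hatA_word:
  assumes "a \<noteq> []" "\<forall>m\<in>set a. 1 \<le> m"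
  shows "primitive idx3 (hatA_word a)"
  using assms nonneg_hatA_prod[of "rev a"] matpow_hatA_prod_pos[of "rev a"]
  unfolding primitive_def hatA_word_eq_hatA_prod_rev nonneg_matrix_def
  by (intro conjI exI[of _ 5]) auto

section \<open>2x2 matrices and the continued fraction recursion\<close>

datatype mat2 = M2 real real real real

fun mat2_mul :: "mat2 \<Rightarrow> mat2 \<Rightarrow> mat2" where
  "mat2_mul (M2 a b c d) (M2 e f g h) = M2 (a*e + b*g) (a*f + b*h) (c*e + d*g) (c*f + d*h)"

fun mat2_apply :: "mat2 \<Rightarrow> real \<times> real \<Rightarrow> real \<times> real" where
  "mat2_apply (M2 a b c d) (x, y) = (a*x + b*y, c*x + d*y)"

fun mat2_transpose :: "mat2 \<Rightarrow> mat2" where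
  "mat2_transpose (M2 a b c d) = M2 a c b d"

fun mat2_nonneg :: "mat2 \<Rightarrow> bool" where
  "mat2_nonneg (M2 a b c d) \<longleftrightarrow> 0 \<le> a \<and> 0 \<le> b \<and> 0 \<le> c \<and> 0 \<le> d"

fun perron_root :: "mat2 \<Rightarrow> real" where
  "perron_root (M2 a b c d) = (a + d + sqrt ((a - d)\<^sup>2 + 4*b*c)) / 2"

abbreviation mat2_id :: mat2 where "mat2_id \<equiv> M2 1 0 0 1"

lemma mat2_apply_mul: "mat2_apply (mat2_mul A B) p = mat2_apply A (mat2_apply B p)"
  by (cases A; cases B; cases p) (simp add: algebra_simps)

lemma mat2_mul_assoc: "mat2_mul (mat2_mul A B) C = mat2_mul A (mat2_mul B C)"
  by (cases A; cases B; cases C) (simp add: algebra_simps)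

lemma mat2_transpose_mul:
  "mat2_transpose (mat2_mul A B) = mat2_mul (mat2_transpose B) (mat2_transpose A)"
  by (cases A; cases B) (simp add: algebra_simps)

lemma mat2_mul_id_left [simp]: "mat2_mul mat2_id A = A"
  by (cases A) simp

lemma mat2_mul_id_right [simp]: "mat2_mul A mat2_id = A"
  by (cases A) simp

lemma perron_root_transpose: "perron_root (mat2_transpose M) = perron_root M"
  by (cases M) (simp add: mult.commute mult.left_commute)

lemma mat2_apply_scaleR: "mat2_apply M (c *\<^sub>R p) = c *\<^sub>R mat2_apply M p"
  by (cases M; cases p) (simp add: algebra_simps)

lemma mat2_apply_mono:
  assumes "mat2_nonneg M" "p \<le> q"
  shows "mat2_apply M p \<le> mat2_apply M q"
  using assms by (cases M; cases p; cases q) (auto intro!: add_mono mult_left_mono)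

lemma funpow_mat2_apply_mono:
  "mat2_nonneg M \<Longrightarrow> p \<le> q \<Longrightarrow> (mat2_apply M ^^ n) p \<le> (mat2_apply M ^^ n) q"
  by (induction n) (simp_all add: mat2_apply_mono)

lemma funpow_mat2_apply_eigenvector:
  "mat2_apply M p = E *\<^sub>R p \<Longrightarrow> (mat2_apply M ^^ n) (c *\<^sub>R p) = (c * E ^ n) *\<^sub>R p"
  by (induction n) (simp_all add: mat2_apply_scaleR)

lemma mat2_perron_eigenvector:
  assumes "mat2_nonneg (M2 g11 g12 g21 g22)" "0 < g21" "g21 + g22 < g11 + g12"
  defines "E \<equiv> perron_root (M2 g11 g12 g21 g22)"
  shows "mat2_apply (M2 g11 g12 g21 g22) (E - g22, g21) = E *\<^sub>R (E - g22, g21)"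
    and "g21 < E - g22" and "0 < E"
proof -
  define D where "D = (g11 - g22)\<^sup>2 + 4 * g12 * g21"
  define s where "s = sqrt D"
  have "0 \<le> D" unfolding D_def using assms(1,2) by simp
  then have ss: "s * s = D" unfolding s_def by simp
  have E: "E = (g11 + g22 + s) / 2" unfolding E_def s_def D_def by simp
  have char_poly: "(E - g11) * (E - g22) = g12 * g21"
  proof -
    have "(E - g11) * (E - g22) = (s * s - (g11 - g22)\<^sup>2) / 4"
      unfolding E by (simp add: field_simps power2_eq_square)
    then show ?thesis using ss unfolding D_def by simp
  qed
  then show "mat2_apply (M2 g11 g12 g21 g22) (E - g22, g21) = E *\<^sub>R (E - g22, g21)"
    by (simp add: algebra_simps)
  have "2 * (g21 + g22) - (g11 + g22) < s"
  proof (cases "2 * (g21 + g22) - (g11 + g22) < 0")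
    case True
    then show ?thesis unfolding s_def using \<open>0 \<le> D\<close> by (smt (verit) real_sqrt_ge_zero)
  next
    case False
    have "D - (2 * (g21 + g22) - (g11 + g22))\<^sup>2 = 4 * g21 * (g11 + g12 - g21 - g22)"
      unfolding D_def by (simp add: power2_eq_square algebra_simps)
    moreover have "0 < 4 * g21 * (g11 + g12 - g21 - g22)" using assms(2,3) by simp
    ultimately have "(2 * (g21 + g22) - (g11 + g22))\<^sup>2 < D" by linarith
    then show ?thesis unfolding s_def by (rule real_less_rsqrt)
  qed
  moreover have "2 * E = g11 + g22 + s" unfolding E by simp
  ultimately show "g21 < E - g22" and "0 < E"
    using assms(1,2) by auto
qed

definition cf_step :: "nat \<Rightarrow> real \<times> real \<Rightarrow> real \<times> real" where
  "cf_step m p = (real m * fst p + snd p, fst p)"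

definition cf_mat :: "nat \<Rightarrow> mat2" where
  "cf_mat m = M2 (real m) 1 1 0"

definition cf_mat_prod :: "nat list \<Rightarrow> mat2" where
  "cf_mat_prod a = foldr (\<lambda>m M. mat2_mul (cf_mat m) M) a mat2_id"

lemma cf_mat_prod_Cons: "cf_mat_prod (m # a) = mat2_mul (cf_mat m) (cf_mat_prod a)"
  by (simp add: cf_mat_prod_def)

lemma mat2_apply_cf_mat_prod: "mat2_apply (cf_mat_prod a) p = foldr cf_step a p"
proof (induction a arbitrary: p)
  case Nil
  then show ?case by (cases p) (simp add: cf_mat_prod_def)
next
  case (Cons m a)
  have "mat2_apply (cf_mat m) q = cf_step m q" for q
    by (cases q) (simp add: cf_mat_def cf_step_def)
  then show ?case using Cons by (simp add: cf_mat_prod_Cons mat2_apply_mul)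
qed

lemma cf_mat_prod_append: "cf_mat_prod (a @ b) = mat2_mul (cf_mat_prod a) (cf_mat_prod b)"
  by (induction a) (simp_all add: cf_mat_prod_def mat2_mul_assoc)

lemma cf_mat_prod_rev: "cf_mat_prod (rev a) = mat2_transpose (cf_mat_prod a)"
proof (induction a)
  case Nil
  then show ?case by (simp add: cf_mat_prod_def)
next
  case (Cons m a)
  have "cf_mat_prod [m] = cf_mat m" by (simp add: cf_mat_prod_def)
  then show ?case
    using Cons by (simp add: cf_mat_prod_append cf_mat_prod_Cons mat2_transpose_mul cf_mat_def)
qed

lemma perron_root_cf_mat_prod_rev: "perron_root (cf_mat_prod (rev a)) = perron_root (cf_mat_prod a)"
  by (simp add: cf_mat_prod_rev perron_root_transpose)

fun cf_shaped :: "mat2 \<Rightarrow> bool" where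
  "cf_shaped (M2 a b c d) \<longleftrightarrow> mat2_nonneg (M2 a b c d) \<and> 1 \<le> a \<and> 1 \<le> c + d"

lemma cf_shaped_cf_mat_prod: "\<forall>m\<in>set a. 1 \<le> m \<Longrightarrow> cf_shaped (cf_mat_prod a)"
proof (induction a)
  case Nil
  then show ?case by (simp add: cf_mat_prod_def)
next
  case (Cons m a)
  obtain n11 n12 n21 n22 where U: "cf_mat_prod a = M2 n11 n12 n21 n22"
    by (cases "cf_mat_prod a")
  have shaped: "cf_shaped (M2 n11 n12 n21 n22)" and m: "1 \<le> real m"
    using Cons U by auto
  then have "n11 \<le> real m * n11"
    using mult_right_mono[of 1 "real m" n11] by simp
  moreover have "1 \<le> n11" "0 \<le> n21" using shaped by auto
  ultimately have "1 \<le> real m * n11 + n21" by linarith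
  with shaped show ?case by (simp add: cf_mat_prod_Cons U cf_mat_def)
qed

lemma mat2_nonneg_cf_mat_prod: "\<forall>m\<in>set a. 1 \<le> m \<Longrightarrow> mat2_nonneg (cf_mat_prod a)"
  using cf_shaped_cf_mat_prod[of a] by (cases "cf_mat_prod a") simp

lemma cf_mat_prod_eigenvector:
  assumes "a \<noteq> []" "\<forall>m\<in>set a. 1 \<le> m"
  obtains p where "mat2_apply (cf_mat_prod a) p = perron_root (cf_mat_prod a) *\<^sub>R p"
    and "0 < snd p" and "snd p < fst p" and "0 < perron_root (cf_mat_prod a)"
proof -
  obtain m b where a: "a = m # b" using assms(1) by (cases a) auto
  obtain n11 n12 n21 n22 where U: "cf_mat_prod b = M2 n11 n12 n21 n22"
    by (cases "cf_mat_prod b")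
  have m: "1 \<le> real m" and shaped: "cf_shaped (M2 n11 n12 n21 n22)"
    using assms(2) cf_shaped_cf_mat_prod[of b] a U by auto
  define M where "M = M2 (real m * n11 + n21) (real m * n12 + n22) n11 n12"
  have "n11 + n12 \<le> real m * (n11 + n12)"
    using shaped m mult_right_mono[of 1 "real m" "n11 + n12"] by simp
  then have "n11 + n12 < (real m * n11 + n21) + (real m * n12 + n22)"
    using shaped by (simp add: algebra_simps)
  moreover have "cf_mat_prod a = M" using a U by (simp add: cf_mat_prod_Cons cf_mat_def M_def)
  moreover have "mat2_nonneg M" "0 < n11"
    using shaped m by (simp_all add: M_def)
  ultimately show ?thesis
    using mat2_perron_eigenvector[of "real m * n11 + n21" "real m * n12 + n22" n11 n12]
    by (intro that[of "(perron_root M - n12, n11)"]) (simp_all add: M_def del: perron_root.simps)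
qed

section \<open>The Perron--Frobenius eigenvalue\<close>

lemma eigenvalue_norm_le_of_pos_eigenvector:
  assumes fin: "finite I" and nonneg: "nonneg_matrix I M" and pos: "\<forall>v\<in>I. 0 < u v"
    and eigen: "\<forall>v\<in>I. (\<Sum>w\<in>I. M v w * u w) = E * u v"
    and "is_eigenvalue I M c"
  shows "cmod c \<le> E"
proof -
  obtain x where "\<exists>v\<in>I. x v \<noteq> 0"
    and x: "\<forall>v\<in>I. (\<Sum>w\<in>I. complex_of_real (M v w) * x w) = c * x v"
    using assms(5) unfolding is_eigenvalue_def by blast
  then obtain v1 where v1: "v1 \<in> I" "x v1 \<noteq> 0" by blast
  \<comment> \<open>compare |x| with u at a coordinate where |x w| / u w is maximal\<close>
  define r where "r w = cmod (x w) / u w" for w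
  define t where "t = Max (r ` I)"
  have "t \<in> r ` I" unfolding t_def using fin v1 by (intro Max_in) auto
  then obtain v where v: "v \<in> I" "r v = t" by auto
  have r_le: "r w \<le> t" if "w \<in> I" for w unfolding t_def using fin that by (intro Max_ge) auto
  have "0 < r v1" unfolding r_def using v1 pos by auto
  then have "0 < t" using r_le[OF v1(1)] by linarith
  have xv: "cmod (x v) = t * u v" using v pos unfolding r_def by (auto simp: field_simps)
  have "cmod c * cmod (x v) = cmod (\<Sum>w\<in>I. complex_of_real (M v w) * x w)"
    using x v by (simp add: norm_mult)
  also have "\<dots> \<le> (\<Sum>w\<in>I. M v w * cmod (x w))"
    using nonneg v unfolding nonneg_matrix_def
    by (auto intro!: order_trans[OF norm_sum] sum_mono simp: norm_mult)
  also have "\<dots> \<le> (\<Sum>w\<in>I. M v w * (t * u w))"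
    using nonneg v r_le pos unfolding nonneg_matrix_def r_def
    by (intro sum_mono mult_left_mono) (auto simp: divide_le_eq)
  also have "\<dots> = t * (\<Sum>w\<in>I. M v w * u w)"
    by (simp add: sum_distrib_left algebra_simps)
  also have "\<dots> = E * cmod (x v)"
    using eigen v xv by simp
  finally show ?thesis
    using \<open>0 < t\<close> pos v xv by simp
qed

lemma PF_eigenvalue_eq_of_pos_eigenvector:
  assumes fin: "finite I" and "I \<noteq> {}" and nonneg: "nonneg_matrix I M"
    and pos: "\<forall>v\<in>I. 0 < u v" and eigen: "\<forall>v\<in>I. (\<Sum>w\<in>I. M v w * u w) = E * u v"
  shows "PF_eigenvalue I M = E"
  unfolding PF_eigenvalue_def
proof (rule cSup_eq_maximum)
  obtain v0 where v0: "v0 \<in> I" using \<open>I \<noteq> {}\<close> by auto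
  have "0 \<le> (\<Sum>w\<in>I. M v0 w * u w)"
    using nonneg pos v0 unfolding nonneg_matrix_def by (auto intro!: sum_nonneg simp: less_imp_le)
  then have "0 \<le> E * u v0" using eigen v0 by simp
  moreover have "0 < u v0" using pos v0 by blast
  ultimately have "0 \<le> E" by (simp add: zero_le_mult_iff)
  moreover have "is_eigenvalue I M (complex_of_real E)"
    unfolding is_eigenvalue_def
  proof (intro exI[of _ "\<lambda>w. complex_of_real (u w)"] conjI ballI)
    show "\<exists>v\<in>I. complex_of_real (u v) \<noteq> 0" using v0 pos by force
    show "(\<Sum>w\<in>I. complex_of_real (M v w) * complex_of_real (u w))
        = complex_of_real E * complex_of_real (u v)" if "v \<in> I" for v
      using eigen that by (simp flip: of_real_mult of_real_sum)
  qed
  ultimately show "E \<in> {cmod c |c. is_eigenvalue I M c}" by force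
  show "y \<le> E" if "y \<in> {cmod c |c. is_eigenvalue I M c}" for y
    using that eigenvalue_norm_le_of_pos_eigenvector[OF fin nonneg pos eigen] by auto
qed

section \<open>Lifting the recursion to hat A\<close>

definition lift_pair :: "real \<times> real \<Rightarrow> nat \<Rightarrow> real" where
  "lift_pair p i = (if i = 0 then snd p else if i = 1 then fst p else fst p - snd p)"

lemma lift_pair_pos: "0 < snd p \<Longrightarrow> snd p < fst p \<Longrightarrow> 0 < lift_pair p i"
  by (simp add: lift_pair_def)

lemma lift_pair_scaleR: "lift_pair (c *\<^sub>R p) i = c * lift_pair p i"
  by (simp add: lift_pair_def algebra_simps)

lemma hatA_lift_pair:
  "i \<in> idx3 \<Longrightarrow> (\<Sum>j\<in>idx3. hatA m i j * lift_pair p j) = lift_pair (cf_step m p) i"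
  unfolding sum_idx3 by (auto simp: idx3_def hatA_def lift_pair_def cf_step_def algebra_simps)

lemma hatA_prod_lift_pair:
  "i \<in> idx3 \<Longrightarrow> (\<Sum>j\<in>idx3. hatA_prod a i j * lift_pair p j) = lift_pair (foldr cf_step a p) i"
proof (induction a arbitrary: i)
  case Nil
  then show ?case by (simp add: hatA_prod_def matid_def if_distrib[of "\<lambda>x. x * _"] cong: if_cong)
next
  case (Cons m a)
  have "(\<Sum>j\<in>idx3. hatA_prod (m # a) i j * lift_pair p j)
      = (\<Sum>l\<in>idx3. hatA m i l * (\<Sum>j\<in>idx3. hatA_prod a l j * lift_pair p j))"
    unfolding hatA_prod_Cons by (rule sum_matmul[OF finite_idx3])
  also have "\<dots> = lift_pair (foldr cf_step (m # a) p) i"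
    using Cons by (simp add: hatA_lift_pair)
  finally show ?case .
qed

lemma PF_eigenvalue_hatA_word:
  assumes "a \<noteq> []" "\<forall>m\<in>set a. 1 \<le> m"
  shows "PF_eigenvalue idx3 (hatA_word a) = perron_root (cf_mat_prod a)"
proof -
  have "rev a \<noteq> []" "\<forall>m\<in>set (rev a). 1 \<le> m" using assms by auto
  then obtain p where "mat2_apply (cf_mat_prod (rev a)) p = perron_root (cf_mat_prod (rev a)) *\<^sub>R p"
    and "0 < snd p" "snd p < fst p"
    by (rule cf_mat_prod_eigenvector)
  then have p: "mat2_apply (cf_mat_prod (rev a)) p = perron_root (cf_mat_prod a) *\<^sub>R p"
    "0 < snd p" "snd p < fst p"
    by (simp_all only: perron_root_cf_mat_prod_rev)
  show ?thesis
  proof (rule PF_eigenvalue_eq_of_pos_eigenvector[where u = "lift_pair p"])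
    show "nonneg_matrix idx3 (hatA_word a)"
      using assms(2) by (simp add: hatA_word_eq_hatA_prod_rev nonneg_hatA_prod)
    show "\<forall>v\<in>idx3. 0 < lift_pair p v" using p by (simp add: lift_pair_pos)
    show "\<forall>v\<in>idx3. (\<Sum>w\<in>idx3. hatA_word a v w * lift_pair p w)
        = perron_root (cf_mat_prod a) * lift_pair p v"
      using p(1) by (simp add: hatA_word_eq_hatA_prod_rev hatA_prod_lift_pair
          flip: mat2_apply_cf_mat_prod add: lift_pair_scaleR)
  qed (simp_all add: idx3_def)
qed

section \<open>Admissible words\<close>

fun type_index :: "ty \<Rightarrow> nat" where
  "type_index T1 = 0"
| "type_index T2 = 1"
| "type_index T3 = 2"

definition index_type :: "nat \<Rightarrow> ty" where
  "index_type j = (if j = 0 then T1 else if j = 1 then T2 else T3)"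

lemma index_type_type_index [simp]: "index_type (type_index t) = t"
  by (cases t) (simp_all add: index_type_def)

lemma type_index_in_idx3 [simp]: "type_index t \<in> idx3"
  by (cases t) (simp_all add: idx3_def)

definition arrow_weight :: "nat \<Rightarrow> letter \<Rightarrow> real" where
  "arrow_weight j e = of_bool (arrow (index_type j) e)"

definition tail_index :: "letter list \<Rightarrow> nat" where
  "tail_index u = type_index (letter_type (last u))"

lemma tail_index_in_idx3 [simp]: "tail_index u \<in> idx3"
  by (simp add: tail_index_def)

lemma incA_eq_arrow_weight: "incA a v w = arrow_weight (tail_index v) (hd w)"
  by (simp add: incA_def arrow_weight_def tail_index_def)

lemma arrow_weight_nonneg: "0 \<le> arrow_weight j e"
  by (simp add: arrow_weight_def)

lemma alphabet_eq:
  "alphabet m = (\<lambda>i. (T1, i, m)) ` {1..m+1} \<union> {(T2, 1, m)} \<union> (\<lambda>i. (T3, i, m)) ` {1..m}"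
  by (auto simp: alphabet_def)

lemma finite_alphabet [simp]: "finite (alphabet m)"
  by (simp add: alphabet_eq)

lemma sum_alphabet:
  "(\<Sum>e\<in>alphabet m. f e) = (\<Sum>i=1..m+1. f (T1, i, m)) + f (T2, 1, m) + (\<Sum>i=1..m. f (T3, i, m))"
proof -
  let ?A = "(\<lambda>i. (T1, i, m)) ` {1..m+1}" and ?C = "(\<lambda>i. (T3, i, m)) ` {1..m}"
  have "sum f (?A \<union> {(T2, 1, m)} \<union> ?C) = sum f (?A \<union> {(T2, 1, m)}) + sum f ?C"
    by (rule sum.union_disjoint) auto
  also have "sum f (?A \<union> {(T2, 1, m)}) = sum f ?A + f (T2, 1, m)"
    by (subst sum.union_disjoint) auto
  finally show ?thesis
    unfolding alphabet_eq by (simp add: sum.reindex inj_on_def)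
qed

lemma arrow_T1_or_T2: "e \<in> alphabet m \<Longrightarrow> arrow T1 e \<or> arrow T2 e"
  by (auto simp: alphabet_def)

lemma sum_if_const: "finite A \<Longrightarrow> (\<Sum>i\<in>A. if P i then x else 0) = real (card {i\<in>A. P i}) * (x :: real)"
  by (simp flip: sum.inter_filter)

lemma sum_alphabet_arrow_weight:
  assumes "1 \<le> m" "j \<in> idx3"
  shows "(\<Sum>e\<in>alphabet m. arrow_weight j e * g (type_index (letter_type e)))
    = (\<Sum>l\<in>idx3. hatA m j l * g l)"
proof -
  consider "j = 0" | "j = 1" | "j = 2" using assms(2) by (auto simp: idx3_def)
  then show ?thesis
  proof cases
    case 1
    then show ?thesis
      by (simp add: sum_alphabet sum_idx3 arrow_weight_def index_type_def letter_type_def hatA_def)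
  next
    case 2
    then show ?thesis
      by (simp add: sum_alphabet sum_idx3 arrow_weight_def index_type_def letter_type_def hatA_def
          algebra_simps)
  next
    case 3
    have T1_part: "(\<Sum>i=1..m+1. arrow_weight j (T1, i, m) * g (type_index (letter_type (T1, i, m))))
        = real m * g 0" (is "?S = _")
    proof -
      have "?S = (\<Sum>i=1..m+1. if i \<le> m then g 0 else 0)"
        using 3 by (intro sum.cong) (auto simp: arrow_weight_def index_type_def letter_type_def)
      then show ?thesis by (simp add: sum_if_const)
    qed
    have T3_part: "(\<Sum>i=1..m. arrow_weight j (T3, i, m) * g (type_index (letter_type (T3, i, m))))
        = real (m - 1) * g 2" (is "?S = _")
    proof -
      have "?S = (\<Sum>i=1..m. if i \<le> m - 1 then g 2 else 0)"
        using 3 by (intro sum.cong) (auto simp: arrow_weight_def index_type_def letter_type_def)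
      moreover have "{i\<in>{1..m}. i \<le> m - 1} = {1..m - 1}" by auto
      ultimately show ?thesis by (simp add: sum_if_const)
    qed
    show ?thesis
      using 3 assms(1) unfolding sum_alphabet sum_idx3 T1_part T3_part
      by (simp add: arrow_weight_def index_type_def letter_type_def hatA_def of_nat_diff)
  qed
qed

lemma adm_words_single: "adm_words [m] = (\<lambda>e. [e]) ` alphabet m"
  by (auto simp: adm_words_def length_Suc_conv)

lemma Cons_in_adm_words_Cons_iff:
  assumes "a \<noteq> []"
  shows "e # u \<in> adm_words (m # a)
    \<longleftrightarrow> e \<in> alphabet m \<and> u \<in> adm_words a \<and> arrow (letter_type e) (hd u)"
proof -
  obtain n where "length a = Suc n" using assms by (cases a) auto
  then show ?thesis by (cases u) (auto simp: adm_words_def All_less_Suc2)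
qed

lemma adm_words_Cons:
  assumes "a \<noteq> []"
  shows "adm_words (m # a)
    = (\<lambda>(e, u). e # u) ` (SIGMA e:alphabet m. {u \<in> adm_words a. arrow (letter_type e) (hd u)})"
proof -
  have "\<exists>e u. w = e # u" if "w \<in> adm_words (m # a)" for w
    using that by (auto simp: adm_words_def length_Suc_conv)
  then show ?thesis
    using Cons_in_adm_words_Cons_iff[OF assms] by fastforce
qed

lemma finite_adm_words: "finite (adm_words a)"
proof (induction a)
  case Nil
  have "adm_words [] = {[]}" by (auto simp: adm_words_def)
  then show ?case by simp
next
  case (Cons m a)
  then show ?case by (cases "a = []") (simp_all add: adm_words_single adm_words_Cons)
qed

lemma adm_words_not_Nil: "a \<noteq> [] \<Longrightarrow> w \<in> adm_words a \<Longrightarrow> w \<noteq> []"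
  by (auto simp: adm_words_def)

lemma hd_adm_words: "a \<noteq> [] \<Longrightarrow> w \<in> adm_words a \<Longrightarrow> hd w \<in> alphabet (hd a)"
  by (cases a; cases w) (auto simp: adm_words_def)

lemma sum_adm_words_arrow_weight:
  assumes "a \<noteq> []" "\<forall>m\<in>set a. 1 \<le> m" "j \<in> idx3"
  shows "(\<Sum>u\<in>adm_words a. arrow_weight j (hd u) * h (tail_index u))
    = (\<Sum>l\<in>idx3. hatA_prod a j l * h l)"
  using assms
proof (induction a arbitrary: j rule: list_nonempty_induct)
  case (single m)
  have "(\<Sum>u\<in>adm_words [m]. arrow_weight j (hd u) * h (tail_index u))
      = (\<Sum>e\<in>alphabet m. arrow_weight j e * h (type_index (letter_type e)))"
    by (simp add: adm_words_single sum.reindex inj_on_def tail_index_def)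
  also have "\<dots> = (\<Sum>l\<in>idx3. hatA m j l * h l)"
    using single by (intro sum_alphabet_arrow_weight) auto
  also have "\<dots> = (\<Sum>l\<in>idx3. hatA_prod [m] j l * h l)"
    by (intro sum.cong) (simp_all add: hatA_prod_def matmul_matid_right)
  finally show ?case .
next
  case (cons m a)
  let ?follows = "\<lambda>e. {u \<in> adm_words a. arrow (letter_type e) (hd u)}"
  have "(\<Sum>w\<in>adm_words (m # a). arrow_weight j (hd w) * h (tail_index w))
      = (\<Sum>(e, u)\<in>(SIGMA e:alphabet m. ?follows e). arrow_weight j e * h (tail_index u))"
    unfolding adm_words_Cons[OF cons.hyps(1)] using adm_words_not_Nil[OF cons.hyps(1)]
    by (subst sum.reindex) (auto simp: inj_on_def tail_index_def intro!: sum.cong)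
  also have "\<dots> = (\<Sum>e\<in>alphabet m. \<Sum>u\<in>?follows e. arrow_weight j e * h (tail_index u))"
    by (rule sum.Sigma[symmetric]) (auto simp: finite_adm_words)
  also have "\<dots> = (\<Sum>e\<in>alphabet m. arrow_weight j e *
      (\<Sum>u\<in>adm_words a. arrow_weight (type_index (letter_type e)) (hd u) * h (tail_index u)))"
  proof (intro sum.cong refl)
    fix e
    have "(\<Sum>u\<in>?follows e. h (tail_index u))
        = (\<Sum>u\<in>adm_words a. arrow_weight (type_index (letter_type e)) (hd u) * h (tail_index u))"
      by (simp add: sum.inter_filter finite_adm_words arrow_weight_def of_bool_def
          if_distrib[of "\<lambda>x. x * _"] cong: if_cong)
    then show "(\<Sum>u\<in>?follows e. arrow_weight j e * h (tail_index u)) = arrow_weight j e *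
      (\<Sum>u\<in>adm_words a. arrow_weight (type_index (letter_type e)) (hd u) * h (tail_index u))"
      by (simp flip: sum_distrib_left)
  qed
  also have "\<dots> = (\<Sum>e\<in>alphabet m. arrow_weight j e *
      (\<Sum>l\<in>idx3. hatA_prod a (type_index (letter_type e)) l * h l))"
    using cons by simp
  also have "\<dots> = (\<Sum>l'\<in>idx3. hatA m j l' * (\<Sum>l\<in>idx3. hatA_prod a l' l * h l))"
    using cons by (intro sum_alphabet_arrow_weight) auto
  also have "\<dots> = (\<Sum>l\<in>idx3. hatA_prod (m # a) j l * h l)"
    unfolding hatA_prod_Cons by (rule sum_matmul[OF finite_idx3, symmetric])
  finally show ?case .
qed

lemma matpow_incA:
  assumes a: "a \<noteq> []" "\<forall>m\<in>set a. 1 \<le> m" and v: "v \<in> adm_words a"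
  shows "w \<in> adm_words a \<Longrightarrow> matpow (adm_words a) (incA a) (Suc n) v w
    = (\<Sum>j\<in>idx3. matpow idx3 (hatA_prod a) n (tail_index v) j * arrow_weight j (hd w))"
proof (induction n arbitrary: w)
  case 0
  have "matpow (adm_words a) (incA a) (Suc 0) v w = arrow_weight (tail_index v) (hd w)"
    using v by (simp add: matmul_matid_left finite_adm_words incA_eq_arrow_weight)
  then show ?case
    by (simp add: matid_def tail_index_def if_distrib[of "\<lambda>x. x * _"] cong: if_cong)
next
  case (Suc n)
  let ?P = "matpow idx3 (hatA_prod a) n (tail_index v)"
  have "matpow (adm_words a) (incA a) (Suc (Suc n)) v w
      = (\<Sum>u\<in>adm_words a. (\<Sum>j\<in>idx3. ?P j * arrow_weight j (hd u)) *
          arrow_weight (tail_index u) (hd w))"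
    unfolding matpow.simps(2)[of _ _ "Suc n"] matmul_def
    by (intro sum.cong refl) (simp only: Suc.IH incA_eq_arrow_weight)
  also have "\<dots> = (\<Sum>j\<in>idx3. ?P j *
      (\<Sum>u\<in>adm_words a. arrow_weight j (hd u) * arrow_weight (tail_index u) (hd w)))"
    by (simp add: sum_distrib_left sum_distrib_right mult.assoc) (rule sum.swap)
  also have "\<dots> = (\<Sum>j\<in>idx3. ?P j * (\<Sum>l\<in>idx3. hatA_prod a j l * arrow_weight l (hd w)))"
    using sum_adm_words_arrow_weight[OF a, where h = "\<lambda>l. arrow_weight l (hd w)"] by simp
  also have "\<dots> = (\<Sum>l\<in>idx3. matpow idx3 (hatA_prod a) (Suc n) (tail_index v) l *
      arrow_weight l (hd w))"
    unfolding matpow.simps(2) by (rule sum_matmul[OF finite_idx3, symmetric])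
  finally show ?case .
qed

lemma primitive_incA:
  assumes a: "a \<noteq> []" "\<forall>m\<in>set a. 1 \<le> m"
  shows "primitive (adm_words a) (incA a)"
proof -
  have "0 < matpow (adm_words a) (incA a) (Suc 5) v w"
    if v: "v \<in> adm_words a" and w: "w \<in> adm_words a" for v w
  proof -
    obtain t where "arrow t (hd w)"
      using arrow_T1_or_T2 hd_adm_words[OF a(1) w] by blast
    then have "arrow_weight (type_index t) (hd w) = 1" by (simp add: arrow_weight_def)
    moreover have "0 \<le> matpow idx3 (hatA_prod a) 5 (tail_index v) j" if "j \<in> idx3" for j
      using nonneg_matpow[OF nonneg_hatA_prod[OF a(2)]] that
      by (simp add: nonneg_matrix_def tail_index_def)
    ultimately have "0 < (\<Sum>j\<in>idx3. matpow idx3 (hatA_prod a) 5 (tail_index v) j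
        * arrow_weight j (hd w))"
      using matpow_hatA_prod_pos[OF a] arrow_weight_nonneg
      by (intro sum_pos2[where i = "type_index t"]) (auto simp: tail_index_def)
    then show ?thesis using matpow_incA[OF a v w, where n = 5] by simp
  qed
  then show ?thesis
    unfolding primitive_def by (intro conjI exI[of _ "Suc 5"]) (auto simp: incA_def)
qed

lemma PF_eigenvalue_incA:
  assumes a: "a \<noteq> []" "\<forall>m\<in>set a. 1 \<le> m"
  shows "PF_eigenvalue (adm_words a) (incA a) = perron_root (cf_mat_prod a)"
proof -
  let ?E = "perron_root (cf_mat_prod a)"
  obtain p where p: "mat2_apply (cf_mat_prod a) p = ?E *\<^sub>R p" "0 < snd p" "snd p < fst p"
    and "0 < ?E"
    using cf_mat_prod_eigenvector[OF a] by blast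
  have eigen: "(\<Sum>u\<in>adm_words a. arrow_weight j (hd u) * lift_pair p (tail_index u))
      = ?E * lift_pair p j" if "j \<in> idx3" for j
    using p(1) that a
    by (simp add: sum_adm_words_arrow_weight hatA_prod_lift_pair lift_pair_scaleR
        flip: mat2_apply_cf_mat_prod)
  have "adm_words a \<noteq> {}"
  proof
    assume "adm_words a = {}"
    then have "?E * lift_pair p 0 = 0" using eigen[of 0] by (simp add: idx3_def)
    then show False using \<open>0 < ?E\<close> lift_pair_pos[OF p(2,3), of 0] by simp
  qed
  show ?thesis
  proof (rule PF_eigenvalue_eq_of_pos_eigenvector[where u = "\<lambda>v. lift_pair p (tail_index v)"])
    show "nonneg_matrix (adm_words a) (incA a)" by (simp add: nonneg_matrix_def incA_def)
    show "\<forall>v\<in>adm_words a. 0 < lift_pair p (tail_index v)" using p by (simp add: lift_pair_pos)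
    show "\<forall>v\<in>adm_words a. (\<Sum>w\<in>adm_words a. incA a v w * lift_pair p (tail_index w))
        = ?E * lift_pair p (tail_index v)"
      using eigen by (simp add: incA_eq_arrow_weight)
  qed (simp_all add: finite_adm_words \<open>adm_words a \<noteq> {}\<close>)
qed

section \<open>Denominators of purely periodic continued fractions\<close>

definition cf_pair :: "real \<Rightarrow> nat \<Rightarrow> real \<times> real" where
  "cf_pair x n = (real (q_den x n), if n = 0 then 0 else real (q_den x (n - 1)))"

lemma fst_cf_pair [simp]: "fst (cf_pair x n) = real (q_den x n)"
  by (simp add: cf_pair_def)

lemma cf_pair_0: "cf_pair x 0 = (1, 0)"
  by (simp add: cf_pair_def)

lemma cf_pair_Suc: "cf_pair x (Suc n) = cf_step (cf_digit x n) (cf_pair x n)"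
  by (cases n) (simp_all add: cf_pair_def cf_step_def)

lemma cf_digit_purely_periodic: "x \<in> purely_periodic a \<Longrightarrow> cf_digit x n = a ! (n mod length a)"
  by (simp add: purely_periodic_def)

lemma cf_pair_purely_periodic:
  assumes "x \<in> purely_periodic a"
  shows "cf_pair x (length a * n) = (mat2_apply (cf_mat_prod (rev a)) ^^ n) (1, 0)"
proof (induction n)
  case 0
  then show ?case by (simp add: cf_pair_0)
next
  case (Suc n)
  have "cf_pair x (length a * n + j) = foldr cf_step (rev (take j a)) (cf_pair x (length a * n))"
    if "j \<le> length a" for j
    using that
  proof (induction j)
    case (Suc j)
    then have "cf_digit x (length a * n + j) = a ! j"
      using cf_digit_purely_periodic[OF assms] by simp
    then show ?case using Suc by (simp add: cf_pair_Suc take_Suc_conv_app_nth)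
  qed simp
  from this[of "length a"] show ?case
    using Suc by (simp add: mat2_apply_cf_mat_prod add.commute)
qed

lemma q_den_ge_1: "(\<And>n. 1 \<le> cf_digit x n) \<Longrightarrow> 1 \<le> q_den x n"
  by (induction x n rule: q_den.induct) (simp_all add: trans_le_add2)

lemma q_den_purely_periodic_bounds:
  assumes a: "a \<noteq> []" "\<forall>m\<in>set a. 1 \<le> m" and x: "x \<in> purely_periodic a"
  defines "E \<equiv> perron_root (cf_mat_prod a)"
  shows "real (q_den x (length a * n)) \<le> E ^ n"
    and "E ^ n \<le> real (q_den x (length a * Suc n))"
proof -
  define T where "T = mat2_apply (cf_mat_prod (rev a))"
  have "rev a \<noteq> []" "\<forall>m\<in>set (rev a). 1 \<le> m" using a by auto
  then obtain p where "T p = perron_root (cf_mat_prod (rev a)) *\<^sub>R p" "0 < snd p" "snd p < fst p"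
    unfolding T_def by (rule cf_mat_prod_eigenvector)
  then have p: "T p = E *\<^sub>R p" "0 < snd p" "snd p < fst p"
    by (simp_all add: E_def perron_root_cf_mat_prod_rev)
  have T_mono: "(T ^^ n) q \<le> (T ^^ n) q'" if "q \<le> q'" for q q'
    using that a(2) unfolding T_def by (simp add: funpow_mat2_apply_mono mat2_nonneg_cf_mat_prod)
  have orbit: "cf_pair x (length a * n) = (T ^^ n) (1, 0)" for n
    unfolding T_def by (rule cf_pair_purely_periodic[OF x])
  have scaled_orbit: "(T ^^ n) ((1 / fst p) *\<^sub>R p) = (E ^ n / fst p) *\<^sub>R p"
    using funpow_mat2_apply_eigenvector[of _ p E, OF p(1)[unfolded T_def]] unfolding T_def by simp
  have "(1, 0) \<le> (1 / fst p) *\<^sub>R p" using p by (cases p) (simp add: less_eq_prod_def)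
  from T_mono[OF this] have "fst (cf_pair x (length a * n)) \<le> fst ((E ^ n / fst p) *\<^sub>R p)"
    unfolding orbit scaled_orbit by (simp add: less_eq_prod_def)
  then show "real (q_den x (length a * n)) \<le> E ^ n"
    using p by simp
  have q_ge_1: "1 \<le> real (q_den x m)" for m
    using q_den_ge_1[of x m] cf_digit_purely_periodic[OF x] a by (simp add: Suc_le_eq)
  have "snd p / fst p \<le> 1" using p by simp
  then have "snd p / fst p \<le> real (q_den x (length a - 1))"
    using q_ge_1 by (rule order_trans)
  then have "(1 / fst p) *\<^sub>R p \<le> cf_pair x (length a * 1)"
    using p a(1) q_ge_1[of "length a"] by (cases p) (simp add: less_eq_prod_def cf_pair_def)
  from T_mono[OF this] have "fst ((E ^ n / fst p) *\<^sub>R p) \<le> fst (cf_pair x (length a * Suc n))"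
    unfolding orbit scaled_orbit by (simp add: less_eq_prod_def funpow_swap1)
  then show "E ^ n \<le> real (q_den x (length a * Suc n))"
    using p by simp
qed

lemma q_den_purely_periodic_asymp:
  assumes "a \<noteq> []" "\<forall>m\<in>set a. 1 \<le> m" "x \<in> purely_periodic a"
  defines "E \<equiv> perron_root (cf_mat_prod a)"
  shows "\<exists>C>1. \<forall>n. E ^ n / C \<le> real (q_den x (length a * n))
    \<and> real (q_den x (length a * n)) \<le> C * E ^ n"
proof (intro exI conjI allI)
  have "0 < E" unfolding E_def using cf_mat_prod_eigenvector[OF assms(1,2)] by blast
  then show "1 < E + 1" by simp
  fix n
  have "0 \<le> E * E ^ n" using \<open>0 < E\<close> by simp
  then show "real (q_den x (length a * n)) \<le> (E + 1) * E ^ n"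
    using q_den_purely_periodic_bounds(1)[OF assms(1-3), of n, folded E_def]
    by (simp add: distrib_right)
  show "E ^ n / (E + 1) \<le> real (q_den x (length a * n))"
  proof (cases n)
    case 0
    then show ?thesis using \<open>0 < E\<close> by simp
  next
    case (Suc n')
    have "E ^ n / (E + 1) \<le> E ^ n'"
      using \<open>0 < E\<close> Suc by (simp add: divide_le_eq)
    also have "\<dots> \<le> real (q_den x (length a * n))"
      using q_den_purely_periodic_bounds(2)[OF assms(1-3), of n', folded E_def] Suc by simp
    finally show ?thesis .
  qed
qed

theorem lemma4p1:
  fixes a :: "nat list"
  assumes "a \<noteq> []" and "\<forall>m\<in>set a. 1 \<le> m"
  shows "primitive idx3 (hatA_word a) \<and> primitive (adm_words a) (incA a)
    \<and> PF_eigenvalue idx3 (hatA_word a) = PF_eigenvalue (adm_words a) (incA a)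
    \<and> (\<forall>x\<in>purely_periodic a. \<exists>C>1. \<forall>n.
          PF_eigenvalue (adm_words a) (incA a) ^ n / C \<le> real (q_den x (length a * n))
        \<and> real (q_den x (length a * n)) \<le> C * PF_eigenvalue (adm_words a) (incA a) ^ n)"
  using primitive_hatA_word[OF assms] primitive_incA[OF assms]
    PF_eigenvalue_hatA_word[OF assms] PF_eigenvalue_incA[OF assms]
    q_den_purely_periodic_asymp[OF assms]
  by simp

end
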